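(* For all positive integers $r,k$, let $p$ be the smallest prime with $2k^2r^2<p$ and let $n=rp$. Then there exists a binary $(r,k)$-batch code of dimension $n$ and rate $\frac{r}{r+k}$; its redundancy equals $kp$.
   Context: A binary linear code of length $N$ encoding $n$ information bits $x_1,\dots,x_n$ is an $(r,k)$-batch code if for every multiset $\{i_1,\dots,i_k\}$ of indices there exist $k$ mutually disjoint sets $R_1,\dots,R_k$ of coordinates, each of size at most $r$, such that $x_{i_j}$ is a function of the codeword bits indexed by $R_j$. Its rate is $n/N$ and its redundancy is $N-n$. *)

theory Defs
  imports Complex_Main "HOL-Library.Z2" "HOL-Computational_Algebra.Primes"
begin

text \<open>The message is x (only x i for i < n matters); the codeword bit at
  coordinate j < N is the GF(2)-sum over i < n of x i * G i j.\<close>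

definition encode :: "nat \<Rightarrow> (nat \<Rightarrow> nat \<Rightarrow> bit) \<Rightarrow> (nat \<Rightarrow> bit) \<Rightarrow> nat \<Rightarrow> bit" where
  "encode n G x = (\<lambda>j. \<Sum>i<n. x i * G i j)"

definition recoverable_from ::
  "nat \<Rightarrow> (nat \<Rightarrow> nat \<Rightarrow> bit) \<Rightarrow> nat \<Rightarrow> nat set \<Rightarrow> bool" where
  "recoverable_from n G i R \<longleftrightarrow>
     (\<exists>g :: (nat \<Rightarrow> bit) \<Rightarrow> bit. \<forall>x. x i = g (\<lambda>j. if j \<in> R then encode n G x j else 0))"

text \<open>(r,k)-batch code: for every multiset {i_1,...,i_k} of indices (given as a list
  of length k with entries < n) there are pairwise disjoint coordinate sets
  R_1..R_k of size at most r such that x_{i_j} is recoverable from R_j.\<close>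
definition batch_code ::
  "nat \<Rightarrow> nat \<Rightarrow> nat \<Rightarrow> nat \<Rightarrow> (nat \<Rightarrow> nat \<Rightarrow> bit) \<Rightarrow> bool" where
  "batch_code r k n N G \<longleftrightarrow>
     (\<forall>is. length is = k \<and> set is \<subseteq> {..<n} \<longrightarrow>
        (\<exists>R :: nat \<Rightarrow> nat set.
           (\<forall>j<k. R j \<subseteq> {..<N} \<and> card (R j) \<le> r \<and> recoverable_from n G (is ! j) (R j)) \<and>
           (\<forall>j<k. \<forall>j'<k. j \<noteq> j' \<longrightarrow> R j \<inter> R j' = {})))"

end

theory Submission
  imports Defs
begin

text \<open>Arrange the \<open>rp\<close> information bits in an \<open>r \<times> p\<close> grid (row \<open>i div p\<close>, column
  \<open>i mod p\<close>) and, for each of \<open>k\<close> slopes, append the parities of the \<open>p\<close> parallel lines of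
  that slope modulo \<open>p\<close>; so \<open>N = rp + kp\<close>. A bit is recovered from the \<open>r - 1\<close> other bits of
  a line through it and that line's parity. The slopes are chosen one at a time so that no three
  lines of distinct slopes form a nondegenerate triangle inside the grid; each step excludes
  fewer than \<open>2k\<^sup>2r\<^sup>2 < p\<close> values. For a batch of requests, the first request for a point
  reads the point itself and every later one uses a line through it, chosen greedily: since two
  lines of distinct slopes meet at most once and all triangles are degenerate, each of the other
  \<open>k - 1\<close> requests rules out at most one of the \<open>k\<close> directions.\<close>

lemma int_dvd_abs_less_imp_eq_0:
  fixes x :: int
  assumes "int p dvd x" and "\<bar>x\<bar> < int p"
  shows "x = 0"
  using dvd_imp_le_int[of x "int p"] assms by fastforce

lemma abs_int_diff_less: "a < p \<Longrightarrow> b < p \<Longrightarrow> \<bar>int a - int b\<bar> < int p"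
  by linarith

lemma prime_dvd_mult_small:
  fixes x y :: int
  assumes "prime p" and "int p dvd x * y" and "\<bar>x\<bar> < int p" and "\<bar>y\<bar> < int p"
  shows "x = 0 \<or> y = 0"
proof -
  have "int p dvd x \<or> int p dvd y"
    using assms(1,2) prime_dvd_mult_iff[of "int p"] by simp
  then show ?thesis using assms(3,4) int_dvd_abs_less_imp_eq_0 by blast
qed

lemma prime_linear_congruence_unique:
  fixes a c :: int
  assumes "prime p" and "\<not> int p dvd a"
    and "int p dvd c - a * int v" and "int p dvd c - a * int w" and "v < p" and "w < p"
  shows "v = w"
proof -
  have "int p dvd (c - a * int v) - (c - a * int w)"
    using assms(3,4) by (rule dvd_diff)
  then have "int p dvd a * (int w - int v)"
    by (simp add: algebra_simps)
  then have "int p dvd int w - int v"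
    using assms(1,2) prime_dvd_mult_iff[of "int p"] by simp
  moreover have "\<bar>int w - int v\<bar> < int p" using assms(6,5) by (rule abs_int_diff_less)
  ultimately have "int w - int v = 0" by (rule int_dvd_abs_less_imp_eq_0)
  then show ?thesis by simp
qed

text \<open>Three grid points joined pairwise by lines of slopes \<open>\<sigma>\<^sub>1, \<sigma>\<^sub>2, \<sigma>\<^sub>3\<close> satisfy this relation,
  with the \<open>d\<^sub>i\<close> the differences of their rows.\<close>

definition no_grid_triangle :: "nat \<Rightarrow> nat \<Rightarrow> nat \<Rightarrow> nat \<Rightarrow> nat \<Rightarrow> bool" where
  "no_grid_triangle r p \<sigma>\<^sub>1 \<sigma>\<^sub>2 \<sigma>\<^sub>3 \<longleftrightarrow>
     (\<forall>d\<^sub>1 d\<^sub>2 d\<^sub>3 :: int. d\<^sub>1 + d\<^sub>2 + d\<^sub>3 = 0 \<longrightarrow>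
        \<bar>d\<^sub>1\<bar> < int r \<longrightarrow> \<bar>d\<^sub>2\<bar> < int r \<longrightarrow> \<bar>d\<^sub>3\<bar> < int r \<longrightarrow>
        int p dvd d\<^sub>1 * int \<sigma>\<^sub>1 + d\<^sub>2 * int \<sigma>\<^sub>2 + d\<^sub>3 * int \<sigma>\<^sub>3 \<longrightarrow> d\<^sub>1 = 0 \<and> d\<^sub>2 = 0)"

lemma no_grid_triangle_swap12:
  assumes "no_grid_triangle r p a b c"
  shows "no_grid_triangle r p b a c"
  unfolding no_grid_triangle_def
proof (intro allI impI)
  fix d\<^sub>1 d\<^sub>2 d\<^sub>3 :: int
  assume "d\<^sub>1 + d\<^sub>2 + d\<^sub>3 = 0" "\<bar>d\<^sub>1\<bar> < int r" "\<bar>d\<^sub>2\<bar> < int r" "\<bar>d\<^sub>3\<bar> < int r"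
    and "int p dvd d\<^sub>1 * int b + d\<^sub>2 * int a + d\<^sub>3 * int c"
  moreover have "d\<^sub>2 + d\<^sub>1 + d\<^sub>3 = d\<^sub>1 + d\<^sub>2 + d\<^sub>3"
    and "d\<^sub>2 * int a + d\<^sub>1 * int b + d\<^sub>3 * int c = d\<^sub>1 * int b + d\<^sub>2 * int a + d\<^sub>3 * int c"
    by simp_all
  ultimately show "d\<^sub>1 = 0 \<and> d\<^sub>2 = 0"
    using assms unfolding no_grid_triangle_def by metis
qed

lemma no_grid_triangle_swap23:
  assumes "no_grid_triangle r p a b c"
  shows "no_grid_triangle r p a c b"
  unfolding no_grid_triangle_def
proof (intro allI impI)
  fix d\<^sub>1 d\<^sub>2 d\<^sub>3 :: int
  assume sum: "d\<^sub>1 + d\<^sub>2 + d\<^sub>3 = 0" and "\<bar>d\<^sub>1\<bar> < int r" "\<bar>d\<^sub>2\<bar> < int r" "\<bar>d\<^sub>3\<bar> < int r"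
    and "int p dvd d\<^sub>1 * int a + d\<^sub>2 * int c + d\<^sub>3 * int b"
  moreover have "d\<^sub>1 + d\<^sub>3 + d\<^sub>2 = d\<^sub>1 + d\<^sub>2 + d\<^sub>3"
    and "d\<^sub>1 * int a + d\<^sub>3 * int b + d\<^sub>2 * int c = d\<^sub>1 * int a + d\<^sub>2 * int c + d\<^sub>3 * int b"
    by simp_all
  ultimately have "d\<^sub>1 = 0 \<and> d\<^sub>3 = 0"
    using assms unfolding no_grid_triangle_def by metis
  with sum show "d\<^sub>1 = 0 \<and> d\<^sub>2 = 0" by simp
qed

definition triangle_free_slopes :: "nat \<Rightarrow> nat \<Rightarrow> nat \<Rightarrow> (nat \<Rightarrow> nat) \<Rightarrow> bool" where
  "triangle_free_slopes r p m s \<longleftrightarrow> (\<forall>t<m. s t < p) \<and> inj_on s {..<m} \<and>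
     (\<forall>t\<^sub>1<m. \<forall>t\<^sub>2<m. \<forall>t\<^sub>3<m. distinct [t\<^sub>1, t\<^sub>2, t\<^sub>3] \<longrightarrow> no_grid_triangle r p (s t\<^sub>1) (s t\<^sub>2) (s t\<^sub>3))"

lemma triangle_free_slopes_extend:
  assumes slopes: "triangle_free_slopes r p m s" and "v < p" and fresh: "v \<notin> s ` {..<m}"
    and new: "\<And>i j. i < m \<Longrightarrow> j < m \<Longrightarrow> i \<noteq> j \<Longrightarrow> no_grid_triangle r p (s i) (s j) v"
  shows "triangle_free_slopes r p (Suc m) (s(m := v))"
proof -
  let ?s = "s(m := v)"
  have "\<forall>t<Suc m. ?s t < p" using slopes \<open>v < p\<close> unfolding triangle_free_slopes_def
    by (simp add: less_Suc_eq)
  moreover have "inj_on ?s {..<Suc m}"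
    using slopes fresh unfolding triangle_free_slopes_def lessThan_Suc
    by (auto simp: inj_on_def)
  moreover have "no_grid_triangle r p (?s t\<^sub>1) (?s t\<^sub>2) (?s t\<^sub>3)"
    if t: "t\<^sub>1 < Suc m" "t\<^sub>2 < Suc m" "t\<^sub>3 < Suc m" "distinct [t\<^sub>1, t\<^sub>2, t\<^sub>3]" for t\<^sub>1 t\<^sub>2 t\<^sub>3
  proof -
    consider "m \<notin> {t\<^sub>1, t\<^sub>2, t\<^sub>3}" | "t\<^sub>1 = m" | "t\<^sub>2 = m" | "t\<^sub>3 = m" by blast
    then show ?thesis
    proof cases
      case 1
      then show ?thesis using slopes t unfolding triangle_free_slopes_def by auto
    next
      case 2
      then show ?thesis using new[of t\<^sub>2 t\<^sub>3] t
        by (auto intro: no_grid_triangle_swap12 no_grid_triangle_swap23)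
    next
      case 3
      then show ?thesis using new[of t\<^sub>1 t\<^sub>3] t by (auto intro: no_grid_triangle_swap23)
    next
      case 4
      then show ?thesis using new[of t\<^sub>1 t\<^sub>2] t by auto
    qed
  qed
  ultimately show ?thesis unfolding triangle_free_slopes_def by blast
qed

lemma exists_value_avoiding_relations:
  assumes p: "prime p" and below: "\<forall>t<m. s t < p"
    and few: "m + m * m * (r * (2 * r - 1)) < p"
  shows "\<exists>v<p. v \<notin> s ` {..<m} \<and> (\<forall>i<m. \<forall>j<m. \<forall>a b. 0 \<le> a \<longrightarrow> \<bar>a\<bar> < int r \<longrightarrow> \<bar>b\<bar> < int r \<longrightarrow>
           int p dvd a * int (s i) + b * int (s j) - (a + b) * int v \<longrightarrow> int p dvd a + b)"
proof -
  \<comment> \<open>relations up to sign, each excluding at most one value of \<open>v\<close>\<close>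
  define T where "T = {..<m} \<times> {..<m} \<times> {0..<int r} \<times> {1 - int r..<int r}"
  define solutions where "solutions \<tau> = {v. v < p \<and> (case \<tau> of (i, j, a, b) \<Rightarrow>
      \<not> int p dvd a + b \<and> int p dvd a * int (s i) + b * int (s j) - (a + b) * int v)}" for \<tau>
  define bad where "bad = s ` {..<m} \<union> (\<Union>\<tau>\<in>T. solutions \<tau>)"
  have card_solutions: "card (solutions \<tau>) \<le> 1" for \<tau>
  proof -
    obtain i j a b where \<tau>: "\<tau> = (i, j, a, b)" by (cases \<tau>)
    have "v = w" if "v \<in> solutions \<tau>" "w \<in> solutions \<tau>" for v w
      using that prime_linear_congruence_unique[OF p, of "a + b"]
      unfolding solutions_def \<tau> by auto
    moreover have "finite (solutions \<tau>)" unfolding solutions_def by simp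
    ultimately show ?thesis by (metis One_nat_def card_le_Suc0_iff_eq)
  qed
  have "card bad \<le> card (s ` {..<m}) + card (\<Union>\<tau>\<in>T. solutions \<tau>)"
    unfolding bad_def by (rule card_Un_le)
  also have "card (s ` {..<m}) \<le> m"
    using card_image_le[of "{..<m}" s] by simp
  also have "card (\<Union>\<tau>\<in>T. solutions \<tau>) \<le> (\<Sum>\<tau>\<in>T. card (solutions \<tau>))"
    by (rule card_UN_le) (simp add: T_def)
  also have "\<dots> \<le> (\<Sum>\<tau>\<in>T. 1)"
    by (intro sum_mono card_solutions)
  also have "\<dots> = m * m * (r * (2 * r - 1))"
    unfolding T_def by (simp add: card_cartesian_product nat_diff_distrib' nat_mult_distrib)
  finally have "bad \<noteq> {..<p}" using few by auto
  moreover have "bad \<subseteq> {..<p}" using below unfolding bad_def solutions_def by auto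
  ultimately obtain v where "v < p" and "v \<notin> bad" by blast
  have "int p dvd a + b" if "i < m" "j < m" "0 \<le> a" "\<bar>a\<bar> < int r" "\<bar>b\<bar> < int r"
    and "int p dvd a * int (s i) + b * int (s j) - (a + b) * int v" for i j a b
  proof (rule ccontr)
    assume "\<not> int p dvd a + b"
    then have "v \<in> solutions (i, j, a, b)" using that \<open>v < p\<close> unfolding solutions_def by simp
    moreover have "(i, j, a, b) \<in> T" using that unfolding T_def by auto
    ultimately show False using \<open>v \<notin> bad\<close> unfolding bad_def by blast
  qed
  moreover have "v \<notin> s ` {..<m}" using \<open>v \<notin> bad\<close> unfolding bad_def by blast
  ultimately show ?thesis using \<open>v < p\<close> by blast
qed

lemma exists_new_slope:
  assumes p: "prime p" and "r \<le> p" and below: "\<forall>t<m. s t < p" and inj: "inj_on s {..<m}"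
    and few: "m + m * m * (r * (2 * r - 1)) < p"
  shows "\<exists>v<p. v \<notin> s ` {..<m} \<and>
           (\<forall>i<m. \<forall>j<m. i \<noteq> j \<longrightarrow> no_grid_triangle r p (s i) (s j) v)"
proof -
  obtain v where "v < p" and fresh: "v \<notin> s ` {..<m}"
    and avoids: "\<And>i j a b. i < m \<Longrightarrow> j < m \<Longrightarrow> 0 \<le> a \<Longrightarrow> \<bar>a\<bar> < int r \<Longrightarrow> \<bar>b\<bar> < int r \<Longrightarrow>
      int p dvd a * int (s i) + b * int (s j) - (a + b) * int v \<Longrightarrow> int p dvd a + b"
    using exists_value_avoiding_relations[OF p below few] by blast
  have "no_grid_triangle r p (s i) (s j) v" if "i < m" "j < m" "i \<noteq> j" for i j
    unfolding no_grid_triangle_def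
  proof (intro allI impI)
    fix d\<^sub>1 d\<^sub>2 d\<^sub>3 :: int
    assume sum: "d\<^sub>1 + d\<^sub>2 + d\<^sub>3 = 0" and small: "\<bar>d\<^sub>1\<bar> < int r" "\<bar>d\<^sub>2\<bar> < int r" "\<bar>d\<^sub>3\<bar> < int r"
      and rel: "int p dvd d\<^sub>1 * int (s i) + d\<^sub>2 * int (s j) + d\<^sub>3 * int v"
    have "int p dvd d\<^sub>3"
    proof (cases "0 \<le> d\<^sub>1")
      case True
      have eq: "d\<^sub>1 * int (s i) + d\<^sub>2 * int (s j) - (d\<^sub>1 + d\<^sub>2) * int v
          = d\<^sub>1 * int (s i) + d\<^sub>2 * int (s j) + d\<^sub>3 * int v"
        using sum by algebra
      have "int p dvd d\<^sub>1 + d\<^sub>2"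
        using avoids[OF that(1,2) True small(1,2)] rel unfolding eq by blast
      moreover have "d\<^sub>3 = - (d\<^sub>1 + d\<^sub>2)" using sum by simp
      ultimately show ?thesis by (simp only: dvd_minus_iff)
    next
      case False
      have eq: "- d\<^sub>1 * int (s i) + - d\<^sub>2 * int (s j) - (- d\<^sub>1 + - d\<^sub>2) * int v
          = - (d\<^sub>1 * int (s i) + d\<^sub>2 * int (s j) + d\<^sub>3 * int v)"
        using sum by algebra
      have neg: "0 \<le> - d\<^sub>1" "\<bar>- d\<^sub>1\<bar> < int r" "\<bar>- d\<^sub>2\<bar> < int r"
        using False small(1,2) by simp_all
      have "int p dvd - d\<^sub>1 + - d\<^sub>2"
        using avoids[OF that(1,2) neg] rel unfolding eq dvd_minus_iff by blast
      moreover have "d\<^sub>3 = - d\<^sub>1 + - d\<^sub>2" using sum by simp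
      ultimately show ?thesis by (simp only:)
    qed
    moreover have "\<bar>d\<^sub>3\<bar> < int p" using small(3) \<open>r \<le> p\<close> by simp
    ultimately have "d\<^sub>3 = 0" by (rule int_dvd_abs_less_imp_eq_0)
    then have "d\<^sub>2 = - d\<^sub>1" using sum by simp
    with rel \<open>d\<^sub>3 = 0\<close> have "int p dvd d\<^sub>1 * (int (s i) - int (s j))"
      by (simp add: algebra_simps)
    moreover have "int (s i) - int (s j) \<noteq> 0" using inj that by (auto dest: inj_onD)
    moreover have "\<bar>d\<^sub>1\<bar> < int p" and "\<bar>int (s i) - int (s j)\<bar> < int p"
      using small(1) \<open>r \<le> p\<close> below that by (auto intro: abs_int_diff_less)
    ultimately have "d\<^sub>1 = 0" using prime_dvd_mult_small[OF p] by blast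
    with \<open>d\<^sub>2 = - d\<^sub>1\<close> show "d\<^sub>1 = 0 \<and> d\<^sub>2 = 0" by simp
  qed
  then show ?thesis using \<open>v < p\<close> fresh by blast
qed

lemma triangle_free_slopes_exist:
  assumes p: "prime p" and "0 < r" and large: "2 * k^2 * r^2 < p"
  shows "\<exists>s. triangle_free_slopes r p k s"
proof -
  have "\<exists>s. triangle_free_slopes r p m s" if "m \<le> k" for m
    using that
  proof (induction m)
    case 0
    show ?case by (auto simp: triangle_free_slopes_def)
  next
    case (Suc m)
    then obtain s where s: "triangle_free_slopes r p m s" by auto
    obtain q where "r = Suc q" using \<open>0 < r\<close> gr0_conv_Suc by blast
    have "m \<le> m * m * Suc q" by (cases m) auto
    then have "m + m * m * (r * (2 * r - 1)) \<le> 2 * m^2 * r^2"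
      unfolding \<open>r = Suc q\<close> by (simp add: power2_eq_square algebra_simps)
    also have "\<dots> < 2 * k^2 * r^2"
      using Suc.prems \<open>0 < r\<close> by (simp add: power_strict_mono)
    finally have few: "m + m * m * (r * (2 * r - 1)) < p" using large by linarith
    have "r \<le> 2 * k^2 * r^2"
      using Suc.prems \<open>0 < r\<close> by (simp add: power2_eq_square)
    then have "r \<le> p" using large by linarith
    moreover have "\<forall>t<m. s t < p" and "inj_on s {..<m}"
      using s unfolding triangle_free_slopes_def by simp_all
    ultimately obtain v where "v < p" "v \<notin> s ` {..<m}"
      and "\<forall>i<m. \<forall>j<m. i \<noteq> j \<longrightarrow> no_grid_triangle r p (s i) (s j) v"
      using exists_new_slope[OF p _ _ _ few] by blast
    then show ?case using triangle_free_slopes_extend[OF s] by blast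
  qed
  then show ?thesis by blast
qed

locale grid =
  fixes r p :: nat
  assumes prime_p: "prime p" and r_le_p: "r \<le> p"
begin

text \<open>Point \<open>i < r * p\<close> sits in row \<open>i div p\<close> and column \<open>i mod p\<close>; \<open>line \<sigma> i\<close> is the set of
  grid points whose column is congruent to \<open>intercept \<sigma> i + \<sigma> * row\<close> modulo \<open>p\<close>.\<close>

definition intercept :: "nat \<Rightarrow> nat \<Rightarrow> nat" where
  "intercept \<sigma> i = nat ((int (i mod p) - int \<sigma> * int (i div p)) mod int p)"

definition line :: "nat \<Rightarrow> nat \<Rightarrow> nat set" where
  "line \<sigma> i = {j. j < r * p \<and> intercept \<sigma> j = intercept \<sigma> i}"

lemma p_pos: "0 < p"
  using prime_p prime_gt_0_nat by blast

lemma intercept_less: "intercept \<sigma> i < p"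
  using p_pos unfolding intercept_def by (simp add: nat_less_iff)

lemma intercept_eq_iff:
  "intercept \<sigma> i = intercept \<sigma> j \<longleftrightarrow>
     int p dvd (int (i mod p) - int (j mod p)) - int \<sigma> * (int (i div p) - int (j div p))"
proof -
  have "intercept \<sigma> i = intercept \<sigma> j \<longleftrightarrow>
      (int (i mod p) - int \<sigma> * int (i div p)) mod int p = (int (j mod p) - int \<sigma> * int (j div p)) mod int p"
    unfolding intercept_def using p_pos by (simp add: nat_eq_iff)
  also have "\<dots> \<longleftrightarrow> int p dvd (int (i mod p) - int \<sigma> * int (i div p)) - (int (j mod p) - int \<sigma> * int (j div p))"
    by (rule mod_eq_dvd_iff)
  finally show ?thesis by (simp add: algebra_simps)
qed

lemma row_less: "i < r * p \<Longrightarrow> i div p < r"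
  by (simp add: less_mult_imp_div_less)

lemma line_subset: "line \<sigma> i \<subseteq> {..<r * p}"
  unfolding line_def by auto

lemma finite_line: "finite (line \<sigma> i)"
  using line_subset finite_subset by blast

lemma self_mem_line: "i < r * p \<Longrightarrow> i \<in> line \<sigma> i"
  unfolding line_def by simp

lemma line_sym: "j \<in> line \<sigma> i \<Longrightarrow> i < r * p \<Longrightarrow> i \<in> line \<sigma> j"
  unfolding line_def by simp

lemma line_eq_if_mem: "j \<in> line \<sigma> i \<Longrightarrow> line \<sigma> j = line \<sigma> i"
  unfolding line_def by simp

lemma eq_if_same_row_on_line:
  assumes "j \<in> line \<sigma> i" and "j' \<in> line \<sigma> i" and "j div p = j' div p"
  shows "j = j'"
proof -
  have "intercept \<sigma> j = intercept \<sigma> j'" using assms(1,2) unfolding line_def by simp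
  then have "int p dvd int (j mod p) - int (j' mod p)"
    using assms(3) by (simp add: intercept_eq_iff)
  moreover have "\<bar>int (j mod p) - int (j' mod p)\<bar> < int p"
    using p_pos by (simp add: abs_int_diff_less)
  ultimately have "int (j mod p) - int (j' mod p) = 0" by (rule int_dvd_abs_less_imp_eq_0)
  then have "j mod p = j' mod p" by simp
  have "j = j div p * p + j mod p" by simp
  also have "\<dots> = j' div p * p + j' mod p" using assms(3) \<open>j mod p = j' mod p\<close> by simp
  also have "\<dots> = j'" by simp
  finally show ?thesis .
qed

lemma card_line_le: "card (line \<sigma> i) \<le> r"
proof -
  have "inj_on (\<lambda>j. j div p) (line \<sigma> i)"
    by (rule inj_onI) (use eq_if_same_row_on_line in blast)
  moreover have "(\<lambda>j. j div p) ` line \<sigma> i \<subseteq> {..<r}"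
    using line_subset row_less by (intro image_subsetI) blast
  ultimately have "card (line \<sigma> i) \<le> card {..<r}" by (rule card_inj_on_le) simp
  then show ?thesis by simp
qed

lemma lines_meet_at_most_once:
  assumes "\<sigma> < p" and "\<tau> < p" and "\<sigma> \<noteq> \<tau>"
    and "z \<in> line \<sigma> x" and "z \<in> line \<tau> y" and "w \<in> line \<sigma> x" and "w \<in> line \<tau> y"
  shows "z = w"
proof -
  define dc where "dc = int (z mod p) - int (w mod p)"
  define dr where "dr = int (z div p) - int (w div p)"
  have "intercept \<sigma> z = intercept \<sigma> w" and "intercept \<tau> z = intercept \<tau> w"
    using assms(4-7) unfolding line_def by simp_all
  then have "int p dvd dc - int \<sigma> * dr" and "int p dvd dc - int \<tau> * dr"
    unfolding dc_def dr_def intercept_eq_iff .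
  then have "int p dvd (dc - int \<tau> * dr) - (dc - int \<sigma> * dr)" by (rule dvd_diff[rotated])
  then have "int p dvd (int \<sigma> - int \<tau>) * dr" by (simp add: algebra_simps)
  moreover have "\<bar>int \<sigma> - int \<tau>\<bar> < int p" using assms(1,2) by (rule abs_int_diff_less)
  moreover have "\<bar>dr\<bar> < int p"
    using row_less[of z] row_less[of w] assms(4,6) r_le_p unfolding line_def dr_def
    by (intro abs_int_diff_less) auto
  ultimately have "dr = 0" using prime_dvd_mult_small[OF prime_p] assms(3) by fastforce
  then show ?thesis using eq_if_same_row_on_line[OF assms(4,6)] unfolding dr_def by simp
qed

lemma grid_triangle_degenerate:
  assumes "no_grid_triangle r p \<sigma>\<^sub>1 \<sigma>\<^sub>2 \<sigma>\<^sub>3" and "P < r * p"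
    and "Q \<in> line \<sigma>\<^sub>1 P" and "R \<in> line \<sigma>\<^sub>2 P" and "R \<in> line \<sigma>\<^sub>3 Q"
  shows "P = Q \<and> Q = R"
proof -
  define row where "row i = int (i div p)" for i
  define col where "col i = int (i mod p)" for i
  have PQ: "int p dvd (col Q - col P) - int \<sigma>\<^sub>1 * (row Q - row P)"
    and PR: "int p dvd (col R - col P) - int \<sigma>\<^sub>2 * (row R - row P)"
    and QR: "int p dvd (col R - col Q) - int \<sigma>\<^sub>3 * (row R - row Q)"
    using assms(3-5) unfolding line_def row_def col_def by (simp_all add: intercept_eq_iff)
  have "int p dvd ((col Q - col P) - int \<sigma>\<^sub>1 * (row Q - row P))
      - ((col R - col P) - int \<sigma>\<^sub>2 * (row R - row P)) + ((col R - col Q) - int \<sigma>\<^sub>3 * (row R - row Q))"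
    using dvd_add[OF dvd_diff[OF PQ PR] QR] .
  also have "\<dots> = (row P - row Q) * int \<sigma>\<^sub>1 + (row R - row P) * int \<sigma>\<^sub>2 + (row Q - row R) * int \<sigma>\<^sub>3"
    by (simp add: algebra_simps)
  finally have "row P - row Q = 0 \<and> row R - row P = 0"
    using assms(1) unfolding no_grid_triangle_def
  proof (elim allE impE)
    show "\<bar>row P - row Q\<bar> < int r" "\<bar>row R - row P\<bar> < int r" "\<bar>row Q - row R\<bar> < int r"
      using assms(2-5) row_less unfolding line_def row_def by (auto intro: abs_int_diff_less)
  qed simp_all
  then have "Q div p = P div p" and "R div p = P div p" unfolding row_def by simp_all
  then have "Q = P" and "R = P"
    using eq_if_same_row_on_line[OF assms(3) self_mem_line[OF assms(2)]]
      eq_if_same_row_on_line[OF assms(4) self_mem_line[OF assms(2)]] by simp_all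
  then show ?thesis by simp
qed

end

locale slope_code = grid +
  fixes k :: nat and s :: "nat \<Rightarrow> nat"
  assumes slopes: "triangle_free_slopes r p k s"
begin

lemma slope_less: "t < k \<Longrightarrow> s t < p"
  using slopes unfolding triangle_free_slopes_def by blast

lemma slope_inj: "t < k \<Longrightarrow> t' < k \<Longrightarrow> s t = s t' \<Longrightarrow> t = t'"
  using slopes unfolding triangle_free_slopes_def by (auto dest: inj_onD)

lemma slopes_no_grid_triangle:
  "t\<^sub>1 < k \<Longrightarrow> t\<^sub>2 < k \<Longrightarrow> t\<^sub>3 < k \<Longrightarrow> distinct [t\<^sub>1, t\<^sub>2, t\<^sub>3] \<Longrightarrow>
    no_grid_triangle r p (s t\<^sub>1) (s t\<^sub>2) (s t\<^sub>3)"
  using slopes unfolding triangle_free_slopes_def by blast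

text \<open>Coordinates below \<open>r * p\<close> are systematic; coordinate \<open>r * p + t * p + c\<close> holds the parity
  of the line with slope \<open>s t\<close> and intercept \<open>c\<close>.\<close>

definition parity_index :: "nat \<Rightarrow> nat \<Rightarrow> nat" where
  "parity_index t i = r * p + t * p + intercept (s t) i"

definition generator :: "nat \<Rightarrow> nat \<Rightarrow> bit" where
  "generator i j = of_bool (if j < r * p then i = j
     else intercept (s ((j - r * p) div p)) i = (j - r * p) mod p)"

definition recovery_set :: "nat \<Rightarrow> nat \<Rightarrow> nat set" where
  "recovery_set t i = insert (parity_index t i) (line (s t) i - {i})"

lemma parity_index_ge: "r * p \<le> parity_index t i"
  unfolding parity_index_def by simp

lemma parity_index_less: "t < k \<Longrightarrow> parity_index t i < r * p + k * p"
proof -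
  assume "t < k"
  then have "t * p + p \<le> k * p" by (metis add.commute mult_Suc mult_le_mono1 Suc_leI)
  then show ?thesis unfolding parity_index_def using intercept_less[of "s t" i] by linarith
qed

lemma parity_index_notin_line: "parity_index t i \<notin> line \<sigma> j"
  using parity_index_ge[of t i] unfolding line_def by simp

lemma parity_index_eqD:
  assumes "parity_index t i = parity_index t' i'"
  shows "t = t'" and "intercept (s t) i = intercept (s t') i'"
proof -
  have eq: "t * p + intercept (s t) i = t' * p + intercept (s t') i'"
    using assms unfolding parity_index_def by simp
  have "(t * p + intercept (s t) i) div p = t" "(t' * p + intercept (s t') i') div p = t'"
    using intercept_less p_pos by simp_all
  with eq show "t = t'" by simp
  with eq show "intercept (s t) i = intercept (s t') i'" by simp
qed

lemma encode_systematic: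
  assumes "j < r * p"
  shows "encode (r * p) generator x j = x j"
proof -
  have "encode (r * p) generator x j = (\<Sum>i<r * p. if i = j then x i else 0)"
    unfolding encode_def generator_def using assms by (intro sum.cong) auto
  also have "\<dots> = x j" using assms by simp
  finally show ?thesis .
qed

lemma encode_parity:
  "encode (r * p) generator x (parity_index t i) = (\<Sum>j\<in>line (s t) i. x j)"
proof -
  have "(parity_index t i - r * p) div p = t" and "(parity_index t i - r * p) mod p = intercept (s t) i"
    unfolding parity_index_def using intercept_less p_pos by simp_all
  then have "encode (r * p) generator x (parity_index t i) = (\<Sum>j<r * p. if j \<in> line (s t) i then x j else 0)"
    unfolding encode_def generator_def line_def using parity_index_ge[of t i]
    by (intro sum.cong) auto
  also have "\<dots> = (\<Sum>j\<in>line (s t) i. x j)"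
    using line_subset by (simp add: sum.If_cases Int_absorb1)
  finally show ?thesis .
qed

lemma recoverable_from_singleton: "i < r * p \<Longrightarrow> recoverable_from (r * p) generator i {i}"
  unfolding recoverable_from_def by (rule exI[of _ "\<lambda>w. w i"]) (simp add: encode_systematic)

lemma recoverable_from_recovery_set:
  assumes "i < r * p"
  shows "recoverable_from (r * p) generator i (recovery_set t i)"
  unfolding recoverable_from_def
proof (intro exI allI)
  fix x :: "nat \<Rightarrow> bit"
  let ?w = "\<lambda>j. if j \<in> recovery_set t i then encode (r * p) generator x j else 0"
  have "?w (parity_index t i) = (\<Sum>j\<in>line (s t) i. x j)"
    unfolding recovery_set_def by (simp add: encode_parity)
  also have "\<dots> = x i + (\<Sum>j\<in>line (s t) i - {i}. x j)"
    by (rule sum.remove[OF finite_line self_mem_line[OF assms]])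
  finally have parity: "?w (parity_index t i) = x i + (\<Sum>j\<in>line (s t) i - {i}. x j)" .
  have others: "(\<Sum>j\<in>line (s t) i - {i}. ?w j) = (\<Sum>j\<in>line (s t) i - {i}. x j)"
    by (intro sum.cong) (auto simp: recovery_set_def line_def encode_systematic)
  show "x i = ?w (parity_index t i) - (\<Sum>j\<in>line (s t) i - {i}. ?w j)"
    unfolding parity others by (rule add_diff_cancel[symmetric])
qed

lemma card_recovery_set_le:
  assumes "i < r * p"
  shows "card (recovery_set t i) \<le> r"
proof -
  have "card (recovery_set t i) \<le> Suc (card (line (s t) i - {i}))"
    unfolding recovery_set_def by (rule card_insert_le_m1) (simp_all add: finite_line)
  also have "\<dots> = card (line (s t) i)"
    using card_Suc_Diff1[OF finite_line self_mem_line[OF assms]] by simp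
  finally show ?thesis using card_line_le le_trans by blast
qed

lemma recovery_set_subset: "t < k \<Longrightarrow> recovery_set t i \<subseteq> {..<r * p + k * p}"
  unfolding recovery_set_def using parity_index_less line_subset by fastforce

lemma notin_recovery_set:
  assumes "y < r * p" and "y = x \<or> y \<notin> line (s t) x"
  shows "y \<notin> recovery_set t x"
  using assms parity_index_ge[of t x] unfolding recovery_set_def by auto

lemma unique_direction_through:
  assumes "x < r * p" and "y \<noteq> x" and "t\<^sub>1 < k" and "t\<^sub>2 < k"
    and "y \<in> line (s t\<^sub>1) x" and "y \<in> line (s t\<^sub>2) x"
  shows "t\<^sub>1 = t\<^sub>2"
proof (rule ccontr)
  assume "t\<^sub>1 \<noteq> t\<^sub>2"
  then have "s t\<^sub>1 \<noteq> s t\<^sub>2" using slope_inj assms(3,4) by blast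
  then have "x = y"
    using lines_meet_at_most_once[OF slope_less slope_less _ self_mem_line self_mem_line assms(5,6)]
      assms(1,3,4) by blast
  with assms(2) show False by simp
qed

lemma recovery_sets_disjoint_same_point:
  assumes "x < r * p" and "t < k" and "t' < k" and "t \<noteq> t'"
  shows "recovery_set t x \<inter> recovery_set t' x = {}"
proof -
  have "parity_index t x \<noteq> parity_index t' x"
    using parity_index_eqD(1) assms(4) by blast
  moreover have "(line (s t) x - {x}) \<inter> (line (s t') x - {x}) = {}"
    using lines_meet_at_most_once[OF slope_less slope_less _ _ _ self_mem_line self_mem_line]
      slope_inj assms by blast
  ultimately show ?thesis unfolding recovery_set_def using parity_index_notin_line by blast
qed

lemma conflict_imp_crossing:
  assumes "x < r * p" and "y < r * p" and "x \<notin> line (s t') y"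
    and "y \<in> line (s t) x \<or> recovery_set t x \<inter> recovery_set t' y \<noteq> {}"
  shows "t \<noteq> t' \<and> (\<exists>z. z \<in> line (s t) x \<and> z \<in> line (s t') y)"
proof (cases "y \<in> line (s t) x")
  case True
  then have "t \<noteq> t'" using assms(1,3) line_sym by blast
  with True show ?thesis using self_mem_line[OF assms(2)] by blast
next
  case False
  then obtain z where z: "z \<in> recovery_set t x" "z \<in> recovery_set t' y" using assms(4) by blast
  show ?thesis
  proof (cases "z = parity_index t x")
    case True
    then have "z = parity_index t' y"
      using z(2) parity_index_notin_line unfolding recovery_set_def by blast
    then have "t = t'" and "intercept (s t) y = intercept (s t) x"
      using parity_index_eqD \<open>z = parity_index t x\<close> by metis+
    with False assms(2) show ?thesis unfolding line_def by simp
  next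
    case False
    then have "z \<in> line (s t) x" and "z \<in> line (s t') y"
      using z parity_index_notin_line unfolding recovery_set_def by blast+
    moreover have "t \<noteq> t'"
      using \<open>y \<notin> line (s t) x\<close> \<open>z \<in> line (s t) x\<close> \<open>z \<in> line (s t') y\<close>
        line_eq_if_mem self_mem_line[OF assms(2)] by metis
    ultimately show ?thesis by blast
  qed
qed

lemma unique_crossing_direction:
  assumes "x < r * p" and "x \<notin> line (s t') y" and "t\<^sub>1 < k" and "t\<^sub>2 < k" and "t' < k"
    and "t\<^sub>1 \<noteq> t'" and "t\<^sub>2 \<noteq> t'"
    and "z\<^sub>1 \<in> line (s t\<^sub>1) x" and "z\<^sub>1 \<in> line (s t') y"
    and "z\<^sub>2 \<in> line (s t\<^sub>2) x" and "z\<^sub>2 \<in> line (s t') y"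
  shows "t\<^sub>1 = t\<^sub>2"
proof (rule ccontr)
  assume "t\<^sub>1 \<noteq> t\<^sub>2"
  with assms(3-7) have "no_grid_triangle r p (s t\<^sub>1) (s t\<^sub>2) (s t')"
    by (intro slopes_no_grid_triangle) auto
  moreover have "z\<^sub>2 \<in> line (s t') z\<^sub>1" using assms(9,11) line_eq_if_mem by blast
  ultimately have "x = z\<^sub>1"
    using grid_triangle_degenerate assms(1,8,10) by blast
  with assms(2,9) show False by simp
qed

end

lemma greedy_choice:
  fixes forbidden :: "nat \<Rightarrow> (nat \<Rightarrow> 'a) \<Rightarrow> 'a set"
  assumes available: "\<And>j f. j < K \<Longrightarrow> \<forall>i<j. f i \<in> A \<and> f i \<notin> forbidden i f \<Longrightarrow>
      \<exists>a\<in>A. a \<notin> forbidden j f"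
    and depends_on_earlier: "\<And>j f g. \<forall>i<j. f i = g i \<Longrightarrow> forbidden j f = forbidden j g"
  shows "\<exists>f. \<forall>j<K. f j \<in> A \<and> f j \<notin> forbidden j f"
  using available
proof (induction K)
  case 0
  then show ?case by simp
next
  case (Suc K)
  then obtain f where f: "\<forall>j<K. f j \<in> A \<and> f j \<notin> forbidden j f" by auto
  with Suc.prems[of K f] obtain a where "a \<in> A" "a \<notin> forbidden K f" by auto
  have "forbidden j (f(K := a)) = forbidden j f" if "j \<le> K" for j
    using that by (intro depends_on_earlier) auto
  with f \<open>a \<in> A\<close> \<open>a \<notin> forbidden K f\<close>
  have "\<forall>j<Suc K. (f(K := a)) j \<in> A \<and> (f(K := a)) j \<notin> forbidden j (f(K := a))"
    by (auto simp: less_Suc_eq)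
  then show ?case by blast
qed

locale batch_request = slope_code +
  fixes req :: "nat list"
  assumes req_length: "length req = k" and req_points: "set req \<subseteq> {..<r * p}"
begin

lemma req_less: "j < k \<Longrightarrow> req ! j < r * p"
  using req_length req_points nth_mem by fastforce

text \<open>The first request for a point is served by its systematic bit; a repeated request \<open>j\<close>
  gets the recovery set of the line through it in a direction \<open>f j\<close> that is not blocked.\<close>

definition repeated :: "nat \<Rightarrow> bool" where
  "repeated j \<longleftrightarrow> req ! j \<in> set (take j req)"

definition blocks :: "(nat \<Rightarrow> nat) \<Rightarrow> nat \<Rightarrow> nat \<Rightarrow> nat \<Rightarrow> bool" where
  "blocks f j j' t \<longleftrightarrow> (req ! j' \<noteq> req ! j \<and> req ! j' \<in> line (s t) (req ! j)) \<or>
     (j' < j \<and> repeated j' \<and> recovery_set t (req ! j) \<inter> recovery_set (f j') (req ! j') \<noteq> {})"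

definition forbidden :: "nat \<Rightarrow> (nat \<Rightarrow> nat) \<Rightarrow> nat set" where
  "forbidden j f = (if repeated j then {t. \<exists>j'<k. j' \<noteq> j \<and> blocks f j j' t} else {})"

lemma unique_blocked_direction:
  assumes "j < k" and "j' < k" and "j' \<noteq> j"
    and earlier: "\<forall>i<j. f i < k \<and> f i \<notin> forbidden i f"
    and "t\<^sub>1 < k" and "t\<^sub>2 < k" and "blocks f j j' t\<^sub>1" and "blocks f j j' t\<^sub>2"
  shows "t\<^sub>1 = t\<^sub>2"
proof -
  define x y where "x = req ! j" and "y = req ! j'"
  have "x < r * p" and "y < r * p" using req_less assms(1,2) unfolding x_def y_def by simp_all
  consider "y = x" | "y \<noteq> x" "j' < j" "repeated j'" | "y \<noteq> x" "\<not> (j' < j \<and> repeated j')"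
    by blast
  then show ?thesis
  proof cases
    case 1
    have "t = f j'" if "t < k" and "blocks f j j' t" for t
    proof -
      from that 1 have "j' < j" and "recovery_set t x \<inter> recovery_set (f j') x \<noteq> {}"
        unfolding blocks_def x_def y_def by auto
      moreover from this have "f j' < k" using earlier by blast
      ultimately show ?thesis
        using recovery_sets_disjoint_same_point \<open>x < r * p\<close> that(1) by blast
    qed
    then show ?thesis using assms(5-8) by metis
  next
    case 2
    then have "f j' \<notin> forbidden j' f" using earlier by blast
    then have "\<not> blocks f j' j (f j')" using 2 assms(1,3) unfolding forbidden_def by auto
    then have "x \<notin> line (s (f j')) y" using 2 unfolding blocks_def x_def y_def by auto
    have "f j' < k" using earlier 2 by blast
    have "t\<^sub>i \<noteq> f j' \<and> (\<exists>z. z \<in> line (s t\<^sub>i) x \<and> z \<in> line (s (f j')) y)"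
      if "t\<^sub>i \<in> {t\<^sub>1, t\<^sub>2}" for t\<^sub>i
      using that assms(7,8) 2 unfolding blocks_def x_def[symmetric] y_def[symmetric]
      by (intro conflict_imp_crossing \<open>x < r * p\<close> \<open>y < r * p\<close> \<open>x \<notin> line (s (f j')) y\<close>) auto
    then show ?thesis
      using unique_crossing_direction[OF \<open>x < r * p\<close> \<open>x \<notin> line (s (f j')) y\<close> assms(5,6) \<open>f j' < k\<close>]
      by blast
  next
    case 3
    then have "y \<in> line (s t\<^sub>1) x" and "y \<in> line (s t\<^sub>2) x"
      using assms(7,8) unfolding blocks_def x_def y_def by auto
    with 3 show ?thesis using unique_direction_through \<open>x < r * p\<close> assms(5,6) by blast
  qed
qed

lemma exists_unforbidden_direction:
  assumes "j < k" and earlier: "\<forall>i<j. f i < k \<and> f i \<notin> forbidden i f"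
  shows "\<exists>t<k. t \<notin> forbidden j f"
proof -
  define B where "B j' = {t. t < k \<and> blocks f j j' t}" for j'
  have "card (B j') \<le> 1" if "j' \<in> {..<k} - {j}" for j'
  proof -
    have "finite (B j')" unfolding B_def by simp
    moreover have "t\<^sub>1 = t\<^sub>2" if "t\<^sub>1 \<in> B j'" "t\<^sub>2 \<in> B j'" for t\<^sub>1 t\<^sub>2
      using unique_blocked_direction[OF \<open>j < k\<close> _ _ earlier] that \<open>j' \<in> {..<k} - {j}\<close>
      unfolding B_def by blast
    ultimately show ?thesis by (metis One_nat_def card_le_Suc0_iff_eq)
  qed
  have "card ({..<k} \<inter> forbidden j f) \<le> card (\<Union>j'\<in>{..<k} - {j}. B j')"
    by (rule card_mono) (auto simp: B_def forbidden_def split: if_splits)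
  also have "\<dots> \<le> (\<Sum>j'\<in>{..<k} - {j}. card (B j'))"
    by (rule card_UN_le) simp
  also have "\<dots> \<le> (\<Sum>j'\<in>{..<k} - {j}. 1)"
    by (intro sum_mono \<open>\<And>j'. j' \<in> {..<k} - {j} \<Longrightarrow> card (B j') \<le> 1\<close>)
  also have "\<dots> < k" using \<open>j < k\<close> by simp
  finally have "{..<k} \<inter> forbidden j f \<noteq> {..<k}" by (metis card_lessThan less_irrefl)
  then show ?thesis by blast
qed

lemma exists_direction_choice: "\<exists>f. \<forall>j<k. f j < k \<and> f j \<notin> forbidden j f"
proof -
  have "forbidden j f = forbidden j g" if "\<forall>i<j. f i = g i" for j f g
  proof -
    have "blocks f j j' t \<longleftrightarrow> blocks g j j' t" for j' t
      using that unfolding blocks_def by (cases "j' < j") auto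
    then show ?thesis unfolding forbidden_def by simp
  qed
  then have "\<exists>f. \<forall>j<k. f j \<in> {..<k} \<and> f j \<notin> forbidden j f"
    using exists_unforbidden_direction by (intro greedy_choice) (auto simp: Bex_def)
  then show ?thesis by simp
qed

lemma exists_recovery_sets:
  assumes "0 < r"
  shows "\<exists>R. (\<forall>j<k. R j \<subseteq> {..<r * p + k * p} \<and> card (R j) \<le> r \<and>
                   recoverable_from (r * p) generator (req ! j) (R j)) \<and>
             (\<forall>j<k. \<forall>j'<k. j \<noteq> j' \<longrightarrow> R j \<inter> R j' = {})"
proof -
  obtain f where f: "\<forall>j<k. f j < k \<and> f j \<notin> forbidden j f"
    using exists_direction_choice by blast
  define R where "R j = (if repeated j then recovery_set (f j) (req ! j) else {req ! j})" for j
  have unblocked: "\<not> blocks f j j' (f j)" if "j < k" "j' < k" "j' \<noteq> j" "repeated j" for j j'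
  proof -
    have "f j \<notin> forbidden j f" using f that(1) by blast
    then show ?thesis using that unfolding forbidden_def by auto
  qed
  have request_avoided: "req ! j' \<notin> recovery_set (f j) (req ! j)"
    if "j < k" "j' < k" "j' \<noteq> j" "repeated j" for j j'
    using unblocked[OF that] req_less that(2) by (intro notin_recovery_set) (auto simp: blocks_def)
  have "R j \<inter> R j' = {}" if "j' < j" "j < k" for j j'
  proof (cases "repeated j"; cases "repeated j'")
    assume "repeated j" "repeated j'"
    then show ?thesis using unblocked[of j j'] that unfolding R_def blocks_def by auto
  next
    assume "repeated j" "\<not> repeated j'"
    then show ?thesis using request_avoided[of j j'] that unfolding R_def by auto
  next
    assume "\<not> repeated j" "repeated j'"
    then show ?thesis using request_avoided[of j' j] that unfolding R_def by auto
  next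
    assume "\<not> repeated j" "\<not> repeated j'"
    moreover have "req ! j' \<in> set (take j req)"
      using that req_length by (auto simp: in_set_conv_nth)
    ultimately show ?thesis unfolding R_def repeated_def by auto
  qed
  then have "R j \<inter> R j' = {}" if "j < k" "j' < k" "j \<noteq> j'" for j j'
    using that by (metis Int_commute linorder_neqE_nat)
  moreover have "R j \<subseteq> {..<r * p + k * p} \<and> card (R j) \<le> r \<and>
      recoverable_from (r * p) generator (req ! j) (R j)" if "j < k" for j
    using that f req_less[OF that] assms recovery_set_subset card_recovery_set_le
      recoverable_from_recovery_set recoverable_from_singleton
    unfolding R_def by auto
  ultimately show ?thesis by blast
qed

end

lemma (in slope_code) batch_code_generator:
  assumes "0 < r"
  shows "batch_code r k (r * p) (r * p + k * p) generator"
  unfolding batch_code_def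
proof (intro allI impI)
  fix req :: "nat list"
  assume "length req = k \<and> set req \<subseteq> {..<r * p}"
  then interpret batch_request r p k s req by unfold_locales auto
  show "\<exists>R. (\<forall>j<k. R j \<subseteq> {..<r * p + k * p} \<and> card (R j) \<le> r \<and>
              recoverable_from (r * p) generator (req ! j) (R j)) \<and>
            (\<forall>j<k. \<forall>j'<k. j \<noteq> j' \<longrightarrow> R j \<inter> R j' = {})"
    using exists_recovery_sets[OF assms] .
qed

theorem theorem11:
  fixes r k :: nat
  assumes "0 < r" and "0 < k"
  defines "p \<equiv> (LEAST q :: nat. prime q \<and> 2 * k^2 * r^2 < q)"
  defines "n \<equiv> r * p"
  shows "\<exists>N G. batch_code r k n N G \<and> real n / real N = real r / real (r + k)
                \<and> N - n = k * p"
proof -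
  have "\<exists>q. prime q \<and> 2 * k^2 * r^2 < q" using bigger_prime by blast
  then have "prime p \<and> 2 * k^2 * r^2 < p" unfolding p_def by (rule LeastI_ex)
  then have "prime p" and large: "2 * k^2 * r^2 < p" by auto
  have "r \<le> 2 * k^2 * r^2" using assms(1,2) by (simp add: power2_eq_square)
  then have "r \<le> p" using large by linarith
  obtain s where "triangle_free_slopes r p k s"
    using triangle_free_slopes_exist[OF \<open>prime p\<close> assms(1) large] by blast
  then interpret slope_code r p k s
    using \<open>prime p\<close> \<open>r \<le> p\<close> by unfold_locales
  have code: "batch_code r k n (n + k * p) generator"
    unfolding n_def using batch_code_generator[OF assms(1)] .
  have "real n / real (n + k * p) = (real r * real p) / (real (r + k) * real p)"
    unfolding n_def by (simp add: algebra_simps)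
  also have "\<dots> = real r / real (r + k)" using p_pos by simp
  finally show ?thesis using code by fastforce
qed

end
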